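(* Let $k$ be an odd integer with $k\ge 5$, let $D$ be a strong $k$-quasi-transitive digraph with $\mathrm{diam}(D)\ge k+2$, let $u,v\in V(D)$ with $d(u,v)=k+2$, and let $P$ be a shortest $(u,v)$-path. If $D[V(P)]$ is a semicomplete digraph, then $D[V(D)\setminus V(P)]$ is a semicomplete digraph.
   Context: All digraphs are finite, without loops or multiple arcs (opposite arcs allowed). Vertices $x,y$ are adjacent if $xy$ or $yx$ is an arc. For $k\ge 2$, $D$ is $k$-quasi-transitive if for every path $x_0x_1\ldots x_k$ of length $k$, $x_0$ and $x_k$ are adjacent. $d(x,y)$ is the length of a shortest $(x,y)$-path, $\mathrm{diam}(D)=\max_{x,y}d(x,y)$. $D[S]$ is the induced subdigraph; a semicomplete digraph is one in which every two distinct vertices are adjacent. *)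

theory Defs
  imports Main
begin

definition digraph :: "'a set \<Rightarrow> ('a \<times> 'a) set \<Rightarrow> bool" where
  "digraph V A \<longleftrightarrow> finite V \<and> A \<subseteq> V \<times> V \<and> (\<forall>x. (x, x) \<notin> A)"

definition adjacent :: "('a \<times> 'a) set \<Rightarrow> 'a \<Rightarrow> 'a \<Rightarrow> bool" where
  "adjacent A x y \<longleftrightarrow> (x, y) \<in> A \<or> (y, x) \<in> A"

definition is_path :: "'a set \<Rightarrow> ('a \<times> 'a) set \<Rightarrow> 'a list \<Rightarrow> bool" where
  "is_path V A p \<longleftrightarrow> p \<noteq> [] \<and> set p \<subseteq> V \<and> distinct p \<and>
     (\<forall>i. Suc i < length p \<longrightarrow> (p ! i, p ! Suc i) \<in> A)"

definition is_path_from_to :: "'a set \<Rightarrow> ('a \<times> 'a) set \<Rightarrow> 'a list \<Rightarrow> 'a \<Rightarrow> 'a \<Rightarrow> bool" where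
  "is_path_from_to V A p x y \<longleftrightarrow> is_path V A p \<and> hd p = x \<and> last p = y"

definition path_len :: "'a list \<Rightarrow> nat" where
  "path_len p = length p - 1"

text \<open>Distance d(x,y): length of a shortest (x,y)-path (used only when such a path exists).\<close>

definition dist :: "'a set \<Rightarrow> ('a \<times> 'a) set \<Rightarrow> 'a \<Rightarrow> 'a \<Rightarrow> nat" where
  "dist V A x y = (LEAST n. \<exists>p. is_path_from_to V A p x y \<and> path_len p = n)"

definition strong :: "'a set \<Rightarrow> ('a \<times> 'a) set \<Rightarrow> bool" where
  "strong V A \<longleftrightarrow> (\<forall>x\<in>V. \<forall>y\<in>V. \<exists>p. is_path_from_to V A p x y)"

definition diam :: "'a set \<Rightarrow> ('a \<times> 'a) set \<Rightarrow> nat" where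
  "diam V A = Max {dist V A x y | x y. x \<in> V \<and> y \<in> V}"

definition k_quasi_transitive :: "nat \<Rightarrow> 'a set \<Rightarrow> ('a \<times> 'a) set \<Rightarrow> bool" where
  "k_quasi_transitive k V A \<longleftrightarrow>
     (\<forall>p. is_path V A p \<and> path_len p = k \<longrightarrow> adjacent A (hd p) (last p))"

definition induced_arcs :: "('a \<times> 'a) set \<Rightarrow> 'a set \<Rightarrow> ('a \<times> 'a) set" where
  "induced_arcs A S = A \<inter> (S \<times> S)"

definition semicomplete :: "'a set \<Rightarrow> ('a \<times> 'a) set \<Rightarrow> bool" where
  "semicomplete V A \<longleftrightarrow> (\<forall>x\<in>V. \<forall>y\<in>V. x \<noteq> y \<longrightarrow> adjacent A x y)"

end

theory Submission
  imports Defs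
begin

(* Write P = x 0, ..., x N with N = k + 2.  Being a shortest path, P has no forward chords, so
   semicompleteness turns every backward chord x j -> x i (j >= i + 2) into an arc, and gluing
   segments of P along these chords gives paths inside P of almost any length between prescribed
   ends.  For y outside P let In y and Out y be the indices of its in- and out-neighbours on P.
   Closing such paths through y into paths of length k, k-quasi-transitivity forces strong closure
   properties on In y and Out y, while minimality of P gives j <= i + 2 for i in In y, j in Out y.
   Every y outside P is adjacent to P: otherwise a shortest path from y to P would contain a
   vertex of the same kind that is closer to P.  For non-adjacent w, z outside P, the paths
   w -> x j ~> x i -> z of length k show by an index chase that Out w and In z are not both
   nonempty, and likewise for z, w.  So either P dominates both w and z, and an induction on their
   distances to P shows that they are adjacent, or the same holds in the converse digraph. *)

lemma adjacent_sym: "adjacent A x y \<longleftrightarrow> adjacent A y x"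
  by (auto simp: adjacent_def)

lemma adjacent_converse [simp]: "adjacent (A\<inverse>) x y \<longleftrightarrow> adjacent A x y"
  by (auto simp: adjacent_def)

lemma is_path_nonempty: "is_path V A p \<Longrightarrow> p \<noteq> []"
  by (simp add: is_path_def)

lemma is_path_subset: "is_path V A p \<Longrightarrow> set p \<subseteq> V"
  by (simp add: is_path_def)

lemma is_path_arc: "is_path V A p \<Longrightarrow> Suc i < length p \<Longrightarrow> (p ! i, p ! Suc i) \<in> A"
  by (simp add: is_path_def)

lemma is_path_nth_eq_iff:
  "is_path V A p \<Longrightarrow> a < length p \<Longrightarrow> b < length p \<Longrightarrow> p ! a = p ! b \<longleftrightarrow> a = b"
  by (simp add: is_path_def nth_eq_iff_index_eq)

lemma is_path_append:
  assumes p: "is_path V A p" and q: "is_path V A q"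
    and disjoint: "set p \<inter> set q = {}" and arc: "(last p, hd q) \<in> A"
  shows "is_path V A (p @ q)"
proof -
  have "p \<noteq> []" "q \<noteq> []" using p q by (simp_all add: is_path_def)
  have "((p @ q) ! i, (p @ q) ! Suc i) \<in> A" if "Suc i < length (p @ q)" for i
  proof -
    consider "Suc i < length p" | "Suc i = length p" | "length p \<le> i" by linarith
    then show ?thesis
    proof cases
      case 1
      then show ?thesis using is_path_arc[OF p] by (simp add: nth_append)
    next
      case 2
      then have "i = length p - 1" by simp
      then show ?thesis using arc \<open>p \<noteq> []\<close> \<open>q \<noteq> []\<close>
        by (simp add: nth_append last_conv_nth hd_conv_nth)
    next
      case 3
      then have "Suc (i - length p) < length q" using that by simp
      with 3 show ?thesis using is_path_arc[OF q] by (simp add: nth_append Suc_diff_le)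
    qed
  qed
  with p q disjoint show ?thesis by (auto simp: is_path_def)
qed

lemma is_path_singleton: "y \<in> V \<Longrightarrow> is_path V A [y]"
  by (simp add: is_path_def)

lemma is_path_Cons:
  "is_path V A q \<Longrightarrow> y \<in> V \<Longrightarrow> y \<notin> set q \<Longrightarrow> (y, hd q) \<in> A \<Longrightarrow> is_path V A (y # q)"
  using is_path_append[of V A "[y]" q] is_path_singleton[of y V A] by simp

lemma is_path_snoc:
  "is_path V A q \<Longrightarrow> y \<in> V \<Longrightarrow> y \<notin> set q \<Longrightarrow> (last q, y) \<in> A \<Longrightarrow> is_path V A (q @ [y])"
  using is_path_append[of V A q "[y]"] is_path_singleton[of y V A] by simp

lemma last_take_Suc: "t < length q \<Longrightarrow> last (take (Suc t) q) = q ! t"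
  by (simp add: take_Suc_conv_app_nth)

lemma is_path_take: "is_path V A p \<Longrightarrow> 0 < n \<Longrightarrow> is_path V A (take n p)"
  by (auto simp: is_path_def dest: in_set_takeD)

lemma is_path_drop: "is_path V A p \<Longrightarrow> n < length p \<Longrightarrow> is_path V A (drop n p)"
  by (auto simp: is_path_def dest: in_set_dropD)

lemma is_path_rev_converse: "is_path V A p \<Longrightarrow> is_path V (A\<inverse>) (rev p)"
proof -
  assume p: "is_path V A p"
  have "(rev p ! i, rev p ! Suc i) \<in> A\<inverse>" if "Suc i < length p" for i
    using is_path_arc[OF p, of "length p - Suc (Suc i)"] that
    by (simp add: rev_nth Suc_diff_Suc)
  with p show ?thesis by (simp add: is_path_def)
qed

lemma k_quasi_transitiveD:
  "k_quasi_transitive k V A \<Longrightarrow> is_path V A p \<Longrightarrow> length p = Suc k \<Longrightarrow> adjacent A (hd p) (last p)"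
  by (simp add: k_quasi_transitive_def path_len_def)

lemma k_quasi_transitive_converse:
  assumes "k_quasi_transitive k V A" shows "k_quasi_transitive k V (A\<inverse>)"
  unfolding k_quasi_transitive_def
proof (intro allI impI)
  fix p assume "is_path V (A\<inverse>) p \<and> path_len p = k"
  then have "is_path V A (rev p)" "path_len (rev p) = k" "p \<noteq> []"
    using is_path_rev_converse[of V "A\<inverse>" p] by (auto simp: path_len_def is_path_def)
  then show "adjacent (A\<inverse>) (hd p) (last p)"
    using assms by (auto simp: k_quasi_transitive_def hd_rev last_rev adjacent_sym)
qed

lemma strong_converse: "strong V A \<Longrightarrow> strong V (A\<inverse>)"
  unfolding strong_def is_path_from_to_def
  by (metis converse_converse hd_rev is_path_nonempty is_path_rev_converse last_rev)

lemma k_quasi_transitive_snoc: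
  assumes "k_quasi_transitive k V A" "is_path V A q" "length q = k"
    and "y \<in> V" "y \<notin> set q" "(last q, y) \<in> A"
  shows "adjacent A (hd q) y"
  using k_quasi_transitiveD[OF assms(1) is_path_snoc[OF assms(2,4-6)]] assms(3)
    is_path_nonempty[OF assms(2)] by simp

lemma k_quasi_transitive_Cons:
  assumes "k_quasi_transitive k V A" "is_path V A q" "length q = k"
    and "y \<in> V" "y \<notin> set q" "(y, hd q) \<in> A"
  shows "adjacent A y (last q)"
  using k_quasi_transitiveD[OF assms(1) is_path_Cons[OF assms(2,4-6)]] assms(3)
    is_path_nonempty[OF assms(2)] by simp

lemma k_quasi_transitive_Cons_snoc:
  assumes "k_quasi_transitive k V A" "is_path V A q" "Suc (length q) = k"
    and "w \<in> V" "z \<in> V" "w \<notin> set q" "z \<notin> set q" "w \<noteq> z"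
    and "(w, hd q) \<in> A" "(last q, z) \<in> A"
  shows "adjacent A w z"
proof -
  have "is_path V A (q @ [z])" using assms by (intro is_path_snoc) auto
  then have "is_path V A (w # q @ [z])"
    using assms is_path_nonempty[OF assms(2)] by (intro is_path_Cons) auto
  from k_quasi_transitiveD[OF assms(1) this] show ?thesis using assms(3) by simp
qed

section \<open>Distance into a set of vertices\<close>

(* Only meaningful when some path leads from y into S. *)
definition dist_into :: "'a set \<Rightarrow> ('a \<times> 'a) set \<Rightarrow> 'a set \<Rightarrow> 'a \<Rightarrow> nat" where
  "dist_into V A S y = (LEAST n. \<exists>q. is_path V A q \<and> hd q = y \<and> last q \<in> S \<and> length q = Suc n)"

lemma dist_into_less:
  assumes "is_path V A q" "last q \<in> S" shows "dist_into V A S (hd q) < length q"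
proof -
  have "dist_into V A S (hd q) \<le> length q - 1"
    unfolding dist_into_def using assms is_path_nonempty[OF assms(1)] by (intro Least_le) auto
  then show ?thesis using is_path_nonempty[OF assms(1)] by (cases q) auto
qed

lemma shortest_path_into_exists:
  assumes "strong V A" "y \<in> V" "s \<in> S" "S \<subseteq> V"
  obtains q where "is_path V A q" "hd q = y" "last q \<in> S" "length q = Suc (dist_into V A S y)"
proof -
  obtain q where "is_path V A q" "hd q = y" "last q = s"
    using assms unfolding strong_def is_path_from_to_def by blast
  then have "\<exists>n q. is_path V A q \<and> hd q = y \<and> last q \<in> S \<and> length q = Suc n"
    using assms(3) is_path_nonempty by (metis Suc_pred length_greater_0_conv)
  from LeastI_ex[OF this] show ?thesis using that unfolding dist_into_def by blast
qed

lemma dist_into_le_Cons: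
  assumes q: "is_path V A q" "last q \<in> S" and arc: "(y, hd q) \<in> A" and "y \<in> V"
  shows "dist_into V A S y \<le> length q"
proof (cases "y \<in> set q")
  case True
  then obtain t where t: "t < length q" "q ! t = y" by (metis in_set_conv_nth)
  have "dist_into V A S (hd (drop t q)) < length (drop t q)"
    using q t is_path_drop by (intro dist_into_less) auto
  with t show ?thesis by (simp add: hd_drop_conv_nth)
next
  case False
  have "dist_into V A S (hd (y # q)) < length (y # q)"
    using q arc \<open>y \<in> V\<close> False is_path_nonempty[OF q(1)]
    by (intro dist_into_less is_path_Cons) auto
  then show ?thesis by simp
qed

locale shortest_path_into =
  fixes V :: "'a set" and A :: "('a \<times> 'a) set" and S :: "'a set" and q :: "'a list"
  assumes path: "is_path V A q" and last_in: "last q \<in> S"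
    and shortest: "length q = Suc (dist_into V A S (hd q))"
begin

lemma nth_notin:
  assumes "Suc t < length q" shows "q ! t \<notin> S"
proof
  assume "q ! t \<in> S"
  then have "dist_into V A S (hd (take (Suc t) q)) < length (take (Suc t) q)"
    using assms path by (intro dist_into_less is_path_take) (auto simp: last_take_Suc)
  then show False using assms shortest by simp
qed

lemma length_ge_2: assumes "hd q \<notin> S" shows "2 \<le> length q"
proof (rule ccontr)
  assume "\<not> 2 \<le> length q"
  moreover have "0 < length q" using is_path_nonempty[OF path] by simp
  ultimately have "length q = 1" by linarith
  then have "last q = hd q" by (cases q) auto
  then show False using last_in assms by simp
qed

lemma set_take_disjoint: "t < length q \<Longrightarrow> set (take t q) \<inter> S = {}"
  using nth_notin by (auto simp: in_set_conv_nth)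

lemma dist_into_nth:
  assumes "t < length q" shows "dist_into V A S (q ! t) < length q - t"
  using dist_into_less[of V A "drop t q" S] assms path last_in is_path_drop[OF path assms]
  by (simp add: hd_drop_conv_nth)

lemma arc_from_nth_into:
  assumes arc: "(q ! a, v) \<in> A" and a: "Suc a < length q" and v: "v \<in> S" "v \<in> V"
  shows "length q \<le> a + 2"
proof -
  have "v \<notin> set (take (Suc a) q)"
    using nth_notin a v by (auto simp: in_set_conv_nth)
  then have "is_path V A (take (Suc a) q @ [v])"
    using arc a path v by (intro is_path_snoc is_path_take) (auto simp: last_take_Suc)
  then have "dist_into V A S (hd (take (Suc a) q @ [v])) < length (take (Suc a) q @ [v])"
    using v by (intro dist_into_less) auto
  then show ?thesis using a shortest is_path_nonempty[OF path] by simp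
qed

lemma no_chord:
  assumes "a + 2 \<le> b" "b < length q" shows "(q ! a, q ! b) \<notin> A"
proof
  assume arc: "(q ! a, q ! b) \<in> A"
  have "set (take (Suc a) q) \<inter> set (drop b q) = {}"
    using assms path by (intro set_take_disj_set_drop_if_distinct) (auto simp: is_path_def)
  then have "is_path V A (take (Suc a) q @ drop b q)"
    using assms path arc
    by (intro is_path_append is_path_take is_path_drop) (auto simp: last_take_Suc hd_drop_conv_nth)
  then have "dist_into V A S (hd (take (Suc a) q @ drop b q)) < length (take (Suc a) q @ drop b q)"
    using assms last_in by (intro dist_into_less) auto
  then show False using assms shortest is_path_nonempty[OF path] by simp
qed


lemma notin_if_dist_into_ge:
  assumes "w \<noteq> hd q" "length q \<le> Suc (dist_into V A S w)" shows "w \<notin> set q"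
proof
  assume "w \<in> set q"
  then obtain t where t: "t < length q" "q ! t = w" by (metis in_set_conv_nth)
  then have "t \<noteq> 0" using assms(1) is_path_nonempty[OF path] by (cases "t = 0") (auto simp: hd_conv_nth)
  then show False using dist_into_nth[OF t(1)] t(2) assms(2) by simp
qed

lemma arc_to_hd:
  assumes "k_quasi_transitive k V A" "2 \<le> k" "k < length q" shows "(q ! k, q ! 0) \<in> A"
proof -
  have "adjacent A (hd (take (Suc k) q)) (last (take (Suc k) q))"
    using assms(3) by (intro k_quasi_transitiveD[OF assms(1) is_path_take[OF path]]) auto
  then have "adjacent A (q ! 0) (q ! k)"
    using assms(3) is_path_nonempty[OF path] by (simp add: last_take_Suc hd_conv_nth)
  then show ?thesis using no_chord[of 0 k] assms(2,3) by (auto simp: adjacent_def)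
qed
end

section \<open>A semicomplete shortest path of length k + 2\<close>

locale semicomplete_geodesic =
  fixes V :: "'a set" and A :: "('a \<times> 'a) set" and k :: nat and P :: "'a list"
  assumes quasi_transitive: "k_quasi_transitive k V A"
    and strong: "strong V A" and k_ge_5: "5 \<le> k"
    and path_P: "is_path V A P" and length_P: "length P = k + 3"
    and geodesic: "\<And>q. is_path V A q \<Longrightarrow> hd q = hd P \<Longrightarrow> last q = last P \<Longrightarrow> k + 3 \<le> length q"
    and semicomplete_P: "semicomplete (set P) (induced_arcs A (set P))"
begin

abbreviation N :: nat where "N \<equiv> k + 2"

definition x :: "nat \<Rightarrow> 'a" where "x i = P ! i"

definition seg :: "nat \<Rightarrow> nat \<Rightarrow> 'a list" where "seg s e = map x [s..<Suc e]"

lemma x_in_P: "i \<le> N \<Longrightarrow> x i \<in> set P"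
  using length_P by (simp add: x_def)

lemma x_in_V: "i \<le> N \<Longrightarrow> x i \<in> V"
  using x_in_P is_path_subset[OF path_P] by auto

lemma set_P: "set P = x ` {..N}"
proof -
  have "{..<length P} = {..N}" using length_P by auto
  then show ?thesis by (metis atLeast0AtMost atLeast_upt list.set_map map_nth x_def[abs_def])
qed

lemma x_eq_x_iff: "i \<le> N \<Longrightarrow> j \<le> N \<Longrightarrow> x i = x j \<longleftrightarrow> i = j"
  using path_P length_P by (auto simp: x_def is_path_def nth_eq_iff_index_eq)

lemma hd_P: "hd P = x 0"
  using is_path_nonempty[OF path_P] by (simp add: x_def hd_conv_nth)

lemma last_P: "last P = x N"
  using is_path_nonempty[OF path_P] length_P by (simp add: x_def last_conv_nth)

lemma arc_x_Suc: "i < N \<Longrightarrow> (x i, x (Suc i)) \<in> A"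
  using is_path_arc[OF path_P] length_P by (simp add: x_def)

lemma length_seg [simp]: "length (seg s e) = Suc e - s"
  by (simp add: seg_def del: upt_Suc)

lemma nth_seg: "t < Suc e - s \<Longrightarrow> seg s e ! t = x (s + t)"
  by (simp add: seg_def del: upt_Suc)

lemma set_seg: "set (seg s e) = x ` {s..e}"
  by (auto simp: seg_def)

lemma seg_eq_Nil_iff [simp]: "seg s e = [] \<longleftrightarrow> e < s"
  by (simp add: seg_def)

lemma hd_seg [simp]: "s \<le> e \<Longrightarrow> hd (seg s e) = x s"
  by (simp add: seg_def upt_conv_Cons del: upt_Suc)

lemma last_seg [simp]: "s \<le> e \<Longrightarrow> last (seg s e) = x e"
  by (simp add: seg_def last_map)

lemma set_seg_subset_P: "e \<le> N \<Longrightarrow> set (seg s e) \<subseteq> set P"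
  using x_in_P by (auto simp: set_seg)

lemma is_path_seg: assumes "s \<le> e" "e \<le> N" shows "is_path V A (seg s e)"
proof -
  have "distinct (seg s e)"
    unfolding seg_def using assms by (auto simp: distinct_map inj_on_def x_eq_x_iff)
  moreover have "(seg s e ! i, seg s e ! Suc i) \<in> A" if "Suc i < length (seg s e)" for i
    using that assms arc_x_Suc[of "s + i"] by (simp add: nth_seg)
  ultimately show ?thesis using assms x_in_V by (auto simp: is_path_def set_seg seg_def)
qed

lemma no_forward_chord: assumes "i + 2 \<le> j" "j \<le> N" shows "(x i, x j) \<notin> A"
proof
  assume "(x i, x j) \<in> A"
  then have "is_path V A (seg 0 i @ seg j N)"
    using assms by (intro is_path_append is_path_seg) (auto simp: set_seg x_eq_x_iff)
  then have "k + 3 \<le> length (seg 0 i @ seg j N)"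
    using assms by (intro geodesic) (auto simp: hd_P last_P)
  then show False using assms by simp
qed

lemma backward_arc: assumes "i + 2 \<le> j" "j \<le> N" shows "(x j, x i) \<in> A"
proof -
  have "adjacent A (x j) (x i)"
    using semicomplete_P assms x_in_P x_eq_x_iff[of i j]
    by (auto simp: semicomplete_def adjacent_def induced_arcs_def)
  then show ?thesis using no_forward_chord[OF assms] by (auto simp: adjacent_def)
qed

lemma no_detour:
  assumes "y \<in> V" "y \<notin> set P" "i \<le> N" "j \<le> N" "(x i, y) \<in> A" "(y, x j) \<in> A"
  shows "j \<le> i + 2"
proof (rule ccontr)
  assume "\<not> j \<le> i + 2"
  have "is_path V A (y # seg j N)"
    using assms set_seg_subset_P by (intro is_path_Cons is_path_seg) auto
  then have "is_path V A (seg 0 i @ y # seg j N)"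
    using assms \<open>\<not> j \<le> i + 2\<close> x_in_P
    by (intro is_path_append is_path_seg) (auto simp: set_seg x_eq_x_iff)
  then have "k + 3 \<le> length (seg 0 i @ y # seg j N)"
    using assms by (intro geodesic) (auto simp: hd_P last_P)
  then show False using assms \<open>\<not> j \<le> i + 2\<close> by simp
qed

(* The paths below are segments of P glued by backward chords; in particular D[V(P)] contains
   the Hamiltonian cycle x 0, ..., x N, x 0. *)

lemma is_path_seg_append:
  assumes "s \<le> e" "e \<le> N" "is_path V A q" "set q \<subseteq> x ` {..<s}" "hd q = x t" "t + 2 \<le> e"
  shows "is_path V A (seg s e @ q)"
proof (rule is_path_append)
  show "set (seg s e) \<inter> set q = {}"
    using assms by (force simp: set_seg x_eq_x_iff)
  show "(last (seg s e), hd q) \<in> A" using assms backward_arc by simp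
qed (use assms is_path_seg in auto)

lemma descending_path_in_P:
  assumes "i < c" "c \<le> N" "3 \<le> L" "L + 3 \<le> N"
  obtains q where "is_path V A q" "set q \<subseteq> set P" "hd q = x c" "last q = x i" "length q = Suc L"
proof -
  consider "L \<le> i + 1" | "i + 2 \<le> L" "c + L \<le> N + 1 + i"
    | "i + 3 \<le> L" "N + 2 + i \<le> c + L" | "i + 2 = L" "N + 2 + i \<le> c + L"
    by linarith
  then show ?thesis
  proof cases
    case 1
    let ?q = "seg c c @ seg (i + 1 - L) i"
    have "is_path V A ?q"
      by (rule is_path_seg_append[where t="i + 1 - L"])
        (use assms 1 is_path_seg in \<open>auto simp: set_seg\<close>)
    moreover have "set ?q \<subseteq> set P" using assms set_seg_subset_P by auto
    ultimately show ?thesis using that assms 1 by simp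
  next
    case 2
    let ?q = "seg c (L + c - 1 - i) @ seg 0 i"
    have "is_path V A ?q"
      by (rule is_path_seg_append[where t=0]) (use assms 2 is_path_seg in \<open>auto simp: set_seg\<close>)
    moreover have "set ?q \<subseteq> set P" using assms 2 set_seg_subset_P by auto
    ultimately show ?thesis using that assms 2 by simp
  next
    case 3
    define g where "g = N + 1 + i - L"
    have g: "i + 1 \<le> g" "g \<le> c - 1" "g + 2 \<le> N" using 3 assms by (auto simp: g_def)
    let ?r = "seg g (c - 1) @ seg 0 i"
    have r: "is_path V A ?r"
      by (rule is_path_seg_append[where t=0]) (use assms 3 g is_path_seg in \<open>auto simp: set_seg\<close>)
    have "is_path V A (seg c N @ ?r)"
      by (rule is_path_seg_append[where t=g]) (use assms g r in \<open>auto simp: set_seg\<close>)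
    moreover have "set (seg c N @ ?r) \<subseteq> set P" using assms g set_seg_subset_P by auto
    ultimately show ?thesis using that assms g 3 by (simp add: g_def)
  next
    case 4
    let ?r = "seg (N - 2) (N - 1) @ seg 1 i"
    have r: "is_path V A ?r"
      by (rule is_path_seg_append[where t=1]) (use assms 4 is_path_seg in \<open>auto simp: set_seg\<close>)
    have "is_path V A (seg N N @ ?r)"
      by (rule is_path_seg_append[where t="N - 2"]) (use assms 4 r in \<open>auto simp: set_seg\<close>)
    moreover have "set (seg N N @ ?r) \<subseteq> set P" using assms set_seg_subset_P by auto
    moreover have "c = N" using assms 4 by linarith
    ultimately show ?thesis using assms 4 by (intro that[of "seg N N @ ?r"]) auto
  qed
qed

lemma path_in_P_from:
  assumes "j \<le> N" "L \<le> N"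
  obtains q where "is_path V A q" "set q \<subseteq> set P" "hd q = x j" "length q = Suc L"
proof (cases "j + L \<le> N")
  case True
  then show ?thesis
    using assms is_path_seg set_seg_subset_P by (intro that[of "seg j (j + L)"]) auto
next
  case False
  let ?q = "seg j N @ seg 0 (j + L - N - 1)"
  have "is_path V A ?q"
    by (rule is_path_seg_append[where t=0]) (use assms False is_path_seg in \<open>auto simp: set_seg\<close>)
  then show ?thesis using that assms False set_seg_subset_P by simp
qed

lemma path_in_P_to:
  assumes "i \<le> N" "L \<le> N"
  obtains q where "is_path V A q" "set q \<subseteq> set P" "last q = x i" "length q = Suc L"
proof (cases "L \<le> i")
  case True
  then show ?thesis
    using assms is_path_seg set_seg_subset_P by (intro that[of "seg (i - L) i"]) auto
next
  case False
  let ?q = "seg (i + N + 1 - L) N @ seg 0 i"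
  have "is_path V A ?q"
    by (rule is_path_seg_append[where t=0]) (use assms False is_path_seg in \<open>auto simp: set_seg\<close>)
  then show ?thesis using that assms False set_seg_subset_P by simp
qed

section \<open>Neighbours of a vertex outside P\<close>

definition In :: "'a \<Rightarrow> nat set" where "In y = {i. i \<le> N \<and> (x i, y) \<in> A}"

definition Out :: "'a \<Rightarrow> nat set" where "Out y = {j. j \<le> N \<and> (y, x j) \<in> A}"

lemma In_le: "i \<in> In y \<Longrightarrow> i \<le> N"
  by (simp add: In_def)

lemma Out_le: "j \<in> Out y \<Longrightarrow> j \<le> N"
  by (simp add: Out_def)

lemma adjacent_x_iff: "c \<le> N \<Longrightarrow> adjacent A (x c) y \<longleftrightarrow> c \<in> In y \<union> Out y"
  by (auto simp: adjacent_def In_def Out_def)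

context
  fixes y assumes y: "y \<in> V" "y \<notin> set P"
begin

lemma adjacent_after_In:
  assumes "i \<in> In y" "i < c" "c \<le> N" shows "c \<in> In y \<union> Out y"
proof -
  obtain q where q: "is_path V A q" "set q \<subseteq> set P" "hd q = x c" "last q = x i"
    "length q = Suc (k - 1)"
    by (rule descending_path_in_P[of i c "k - 1"]) (use assms k_ge_5 in auto)
  have "(last q, y) \<in> A" using assms(1) q(4) by (simp add: In_def)
  moreover have "length q = k" using q(5) k_ge_5 by simp
  ultimately have "adjacent A (hd q) y"
    using k_quasi_transitive_snoc[OF quasi_transitive q(1) _ y(1)] q(2) y(2) by blast
  then show ?thesis using assms(3) q(3) adjacent_x_iff by simp
qed

lemma adjacent_before_Out:
  assumes "j \<in> Out y" "c < j" shows "c \<in> In y \<union> Out y"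
proof -
  have "j \<le> N" using assms Out_le by blast
  obtain q where q: "is_path V A q" "set q \<subseteq> set P" "hd q = x j" "last q = x c"
    "length q = Suc (k - 1)"
    by (rule descending_path_in_P[of c j "k - 1"]) (use assms \<open>j \<le> N\<close> k_ge_5 in auto)
  have "(y, hd q) \<in> A" using assms(1) q(3) by (simp add: Out_def)
  moreover have "length q = k" using q(5) k_ge_5 by simp
  ultimately have "adjacent A y (last q)"
    using k_quasi_transitive_Cons[OF quasi_transitive q(1) _ y(1)] q(2) y(2) by blast
  then show ?thesis using assms \<open>j \<le> N\<close> q(4) adjacent_x_iff[of c y] adjacent_sym[of A y] by simp
qed

lemma adjacent_In_shift:
  assumes "i \<in> In y" "t + k = Suc i" shows "t \<in> In y \<union> Out y"
proof -
  have i: "i \<le> N" "(x i, y) \<in> A" using assms In_def by auto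
  have "y \<notin> set (seg t i)" using set_seg_subset_P[OF i(1)] y(2) by blast
  then have "adjacent A (hd (seg t i)) y"
    using i assms k_ge_5
    by (intro k_quasi_transitive_snoc[OF quasi_transitive is_path_seg _ y(1)]) auto
  then show ?thesis using assms i adjacent_x_iff k_ge_5 by simp
qed

lemma adjacent_Out_shift:
  assumes "j \<in> Out y" "i + 1 = j + k" "i \<le> N" shows "i \<in> In y \<union> Out y"
proof -
  have "(y, x j) \<in> A" using assms Out_def by auto
  have "y \<notin> set (seg j i)" using set_seg_subset_P[OF assms(3)] y(2) by blast
  then have "adjacent A y (last (seg j i))"
    using assms \<open>(y, x j) \<in> A\<close> k_ge_5
    by (intro k_quasi_transitive_Cons[OF quasi_transitive is_path_seg _ y(1)]) auto
  then show ?thesis using assms adjacent_x_iff[of i y] adjacent_sym[of A y "x i"] k_ge_5 by simp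
qed

lemma Out_le_In_add_2: "i \<in> In y \<Longrightarrow> j \<in> Out y \<Longrightarrow> j \<le> i + 2"
  using no_detour[OF y, of i j] by (simp add: In_def Out_def)

lemma ex_Out_le_4:
  assumes "j \<in> Out y" obtains j' where "j' \<in> Out y" "j' \<le> 4"
proof (cases "j \<le> 4")
  case False
  then have "0 \<in> In y \<union> Out y" using adjacent_before_Out[OF assms] by simp
  then show ?thesis using that Out_le_In_add_2[of 0 j] assms False by auto
qed (use assms that in blast)

lemma ex_In_add_2_ge:
  assumes "i \<in> In y" obtains i' where "i' \<in> In y" "k \<le> i' + 2"
proof (cases "k \<le> i + 2")
  case False
  then have "N \<in> In y \<union> Out y" using adjacent_after_In[OF assms] by simp
  then show ?thesis using that Out_le_In_add_2[of i N] assms False by auto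
qed (use assms that in blast)

lemma In_upward:
  assumes "Out y = {}" "i \<in> In y" "i \<le> c" "c \<le> N" shows "c \<in> In y"
  using adjacent_after_In[OF assms(2), of c] assms by (cases "i = c") auto

lemma Out_downward:
  assumes "In y = {}" "j \<in> Out y" "c \<le> j" shows "c \<in> Out y"
  using adjacent_before_Out[OF assms(2), of c] assms by (cases "c = j") auto

lemma In_eq_atMost:
  assumes "Out y = {}" "In y \<noteq> {}" shows "In y = {..N}"
proof -
  obtain i where "i \<in> In y" using assms by blast
  then have "N \<in> In y" using In_upward[OF assms(1)] In_le by blast
  then have "3 \<in> In y" using adjacent_In_shift[of N 3] assms by auto
  have "c \<in> In y" if "c \<le> N" for c
  proof (cases "3 \<le> c")
    case True
    then show ?thesis using In_upward[OF assms(1) \<open>3 \<in> In y\<close>] that by blast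
  next
    case False
    then have "c + k - 1 \<in> In y" using In_upward[OF assms(1) \<open>3 \<in> In y\<close>] k_ge_5 by simp
    then show ?thesis using adjacent_In_shift[of "c + k - 1" c] assms k_ge_5 by auto
  qed
  then show ?thesis using In_le by blast
qed

lemma Out_eq_atMost:
  assumes "In y = {}" "Out y \<noteq> {}" shows "Out y = {..N}"
proof -
  obtain j where "j \<in> Out y" using assms by blast
  then have "0 \<in> Out y" using Out_downward[OF assms(1)] by blast
  then have "k - 1 \<in> Out y" using adjacent_Out_shift[of 0 "k - 1"] assms k_ge_5 by auto
  have "c \<in> Out y" if "c \<le> N" for c
  proof (cases "c \<le> k - 1")
    case True
    then show ?thesis using Out_downward[OF assms(1) \<open>k - 1 \<in> Out y\<close>] by blast
  next
    case False
    then have "c + 1 - k \<in> Out y"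
      using Out_downward[OF assms(1) \<open>k - 1 \<in> Out y\<close>, of "c + 1 - k"] that k_ge_5 by simp
    then show ?thesis using adjacent_Out_shift[of "c + 1 - k" c] assms that False by auto
  qed
  then show ?thesis using Out_le by blast
qed

end

lemma shortest_path_to_P:
  assumes "y \<in> V"
  obtains q where "shortest_path_into V A (set P) q" "hd q = y"
    "length q = Suc (dist_into V A (set P) y)"
proof -
  obtain q where "is_path V A q" "hd q = y" "last q \<in> set P"
    "length q = Suc (dist_into V A (set P) y)"
    using shortest_path_into_exists[OF strong assms x_in_P[of 0] is_path_subset[OF path_P]] by blast
  then show ?thesis using that by (simp add: shortest_path_into_def)
qed

lemma path_continue_in_P:
  assumes q: "is_path V A q" "last q \<in> set P" "set (take h q) \<inter> set P = {}" "length q = Suc h"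
    and "0 < h" "h \<le> L" "L \<le> N + h"
  obtains p where "is_path V A p" "hd p = hd q" "last p \<in> set P" "set p \<subseteq> set q \<union> set P"
    "length p = Suc L"
proof -
  obtain j where j: "j \<le> N" "q ! h = x j"
    using q(2,4) set_P is_path_nonempty[OF q(1)] by (auto simp: last_conv_nth)
  obtain r where r: "is_path V A r" "set r \<subseteq> set P" "hd r = x j" "length r = Suc (L - h)"
    by (rule path_in_P_from[OF j(1), of "L - h"]) (use assms in auto)
  have "is_path V A (take h q @ r)"
  proof (rule is_path_append)
    show "set (take h q) \<inter> set r = {}" using q(3) r(2) by auto
    have "last (take h q) = q ! (h - 1)" using last_take_Suc[of "h - 1" q] \<open>0 < h\<close> q(4) by simp
    then show "(last (take h q), hd r) \<in> A"
      using is_path_arc[OF q(1), of "h - 1"] \<open>0 < h\<close> q(4) j r(3) by simp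
  qed (use q(1) \<open>0 < h\<close> is_path_take r in auto)
  moreover have "last (take h q @ r) \<in> set P" using r is_path_nonempty[OF r(1)] by auto
  moreover have "set (take h q @ r) \<subseteq> set q \<union> set P" using r(2) set_take_subset by fastforce
  ultimately show ?thesis using that \<open>0 < h\<close> q(4) r(4) assms is_path_nonempty[OF q(1)] by simp
qed

context
  fixes y assumes y: "y \<in> V" "y \<notin> set P"
begin

lemma adjacent_to_P_if_close:
  assumes "dist_into V A (set P) y \<le> k" shows "In y \<union> Out y \<noteq> {}"
proof -
  obtain q where q: "shortest_path_into V A (set P) q" "hd q = y"
    "length q = Suc (dist_into V A (set P) y)"
    using shortest_path_to_P[OF y(1)] by blast
  interpret q: shortest_path_into V A "set P" q by (fact q(1))
  have "0 < dist_into V A (set P) y" using q.length_ge_2 q(2,3) y(2) by simp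
  have disjoint: "set (take (dist_into V A (set P) y) q) \<inter> set P = {}"
    using q.set_take_disjoint q(3) by simp
  obtain p where p: "is_path V A p" "hd p = y" "last p \<in> set P" "length p = Suc k"
    by (rule path_continue_in_P[OF q.path q.last_in disjoint q(3), of k])
      (use \<open>0 < dist_into V A (set P) y\<close> assms q(2) in auto)
  obtain c where "c \<le> N" "last p = x c" using p(3) set_P by auto
  then have "adjacent A (x c) y"
    using k_quasi_transitiveD[OF quasi_transitive p(1,4)] p(2) adjacent_sym by metis
  then show ?thesis using adjacent_x_iff \<open>c \<le> N\<close> by blast
qed

lemma adjacent_to_P_if_two_steps_from_In:
  assumes "i \<in> In v" "(v, u) \<in> A" "(u, y) \<in> A" "v \<in> V" "u \<in> V" "v \<notin> set P" "u \<notin> set P"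
    and "v \<noteq> u" "v \<noteq> y" "u \<noteq> y"
  shows "In y \<union> Out y \<noteq> {}"
proof -
  have i: "i \<le> N" "(x i, v) \<in> A" using assms(1) by (auto simp: In_def)
  obtain r where r: "is_path V A r" "set r \<subseteq> set P" "last r = x i" "length r = Suc (k - 3)"
    by (rule path_in_P_to[OF i(1), of "k - 3"]) auto
  have "is_path V A [v, u]" using is_path_Cons[OF is_path_singleton] assms by simp
  then have "is_path V A (r @ [v, u])" using r assms i by (intro is_path_append) auto
  then have "adjacent A (hd (r @ [v, u])) y"
    using r y assms k_ge_5 by (intro k_quasi_transitive_snoc[OF quasi_transitive]) auto
  moreover have "hd r \<in> set P" using r is_path_nonempty[OF r(1)] by auto
  then obtain c where "c \<le> N" "hd r = x c" using set_P by auto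
  ultimately have "adjacent A (x c) y" using is_path_nonempty[OF r(1)] by simp
  then show ?thesis using adjacent_x_iff[OF \<open>c \<le> N\<close>] by blast
qed

lemma far_from_P_step:
  assumes far: "In y \<union> Out y = {}" and "k < dist_into V A (set P) y"
  obtains v where "v \<in> V" "v \<notin> set P" "In v \<union> Out v = {}"
    "dist_into V A (set P) v < dist_into V A (set P) y"
proof -
  obtain q where q: "shortest_path_into V A (set P) q" "hd q = y"
    "length q = Suc (dist_into V A (set P) y)"
    using shortest_path_to_P[OF y(1)] by blast
  interpret q: shortest_path_into V A "set P" q by (fact q(1))
  define v where "v = q ! (k - 1)"
  have long: "k + 2 \<le> length q" using assms q(3) by simp
  have q0: "q ! 0 = y" using q(2) is_path_nonempty[OF q.path] by (simp add: hd_conv_nth)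
  have outside: "v \<notin> set P" "q ! k \<notin> set P" using q.nth_notin long k_ge_5 by (auto simp: v_def)
  have in_V: "v \<in> V" "q ! k \<in> V" using is_path_subset[OF q.path] long by (auto simp: v_def)
  have "q ! 0 \<noteq> q ! (k - 1)" "q ! 0 \<noteq> q ! k" "q ! (k - 1) \<noteq> q ! k"
    using is_path_nth_eq_iff[OF q.path, of 0 "k - 1"] is_path_nth_eq_iff[OF q.path, of 0 k]
      is_path_nth_eq_iff[OF q.path, of "k - 1" k] long k_ge_5
    by linarith+
  then have distinct: "v \<noteq> q ! k" "v \<noteq> y" "q ! k \<noteq> y" using q0 by (auto simp: v_def)
  have "(v, q ! k) \<in> A" using is_path_arc[OF q.path, of "k - 1"] long k_ge_5 by (simp add: v_def)
  moreover have "(q ! k, y) \<in> A" using q.arc_to_hd[OF quasi_transitive] long k_ge_5 q0 by simp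
  ultimately have "In v = {}"
    using adjacent_to_P_if_two_steps_from_In[OF _ _ _ in_V outside distinct] far by blast
  moreover have "Out v = {}"
  proof -
    have "length q \<le> k + 1" if "(v, x c) \<in> A" "c \<le> N" for c
      using q.arc_from_nth_into[of "k - 1" "x c"] that long k_ge_5 x_in_P x_in_V
      by (simp add: v_def)
    then show ?thesis using long by (force simp: Out_def)
  qed
  moreover have "dist_into V A (set P) v < dist_into V A (set P) y"
    using q.dist_into_nth[of "k - 1"] long q(3) k_ge_5 unfolding v_def by linarith
  ultimately show ?thesis using that in_V outside by blast
qed

end

lemma adjacent_to_P:
  assumes "y \<in> V" "y \<notin> set P" shows "In y \<union> Out y \<noteq> {}"
  using assms
proof (induction "dist_into V A (set P) y" arbitrary: y rule: less_induct)
  case less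
  show ?case
  proof
    assume far: "In y \<union> Out y = {}"
    show False
    proof (cases "dist_into V A (set P) y \<le> k")
      case True
      then show False using adjacent_to_P_if_close[OF less.prems] far by blast
    next
      case False
      then obtain v where "v \<in> V" "v \<notin> set P" "In v \<union> Out v = {}"
        "dist_into V A (set P) v < dist_into V A (set P) y"
        using far_from_P_step[OF less.prems far] by auto
      then show False using less.hyps by blast
    qed
  qed
qed

section \<open>Vertices dominated by P\<close>

definition dominated :: "'a \<Rightarrow> bool" where
  "dominated y \<longleftrightarrow> y \<in> V \<and> y \<notin> set P \<and> Out y = {} \<and> In y \<noteq> {}"

lemma dominated_adjacent_if_close:
  assumes "dominated w" and q: "shortest_path_into V A (set P) q" and "w \<notin> set q"
    and "Suc t < length q" "length q \<le> k + t"
  shows "adjacent A (q ! t) w"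
proof -
  interpret q: shortest_path_into V A "set P" q by (fact q)
  have w: "w \<in> V" "w \<notin> set P" and w_In: "\<And>c. c \<le> N \<Longrightarrow> (x c, w) \<in> A"
    using assms(1) In_eq_atMost[of w] by (auto simp: dominated_def In_def)
  let ?h = "length q - Suc t"
  have disjoint: "set (take ?h (drop t q)) \<inter> set P = {}"
    using q.nth_notin by (auto simp: in_set_conv_nth)
  obtain p where p: "is_path V A p" "hd p = hd (drop t q)" "last p \<in> set P"
    "set p \<subseteq> set (drop t q) \<union> set P" "length p = Suc (k - 1)"
    by (rule path_continue_in_P[OF is_path_drop[OF q.path, of t] _ disjoint, of "k - 1"])
      (use assms q.last_in k_ge_5 in auto)
  obtain c where "c \<le> N" "last p = x c" using p(3) set_P by auto
  then have "adjacent A (hd p) w"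
    using p w assms(3) w_In k_ge_5
    by (intro k_quasi_transitive_snoc[OF quasi_transitive]) (auto dest: in_set_dropD)
  then show ?thesis using p(2) assms(4) by (simp add: hd_drop_conv_nth)
qed

lemma dominated_along_shortest_path:
  assumes "dominated z" and q: "shortest_path_into V A (set P) q" "hd q = z" and "k + 1 < length q"
  shows "dominated (q ! (k - 1))"
proof -
  interpret q: shortest_path_into V A "set P" q by (fact q(1))
  let ?z' = "q ! (k - 1)"
  have "?z' \<in> V" "?z' \<notin> set P"
    using is_path_subset[OF q.path] q.nth_notin[of "k - 1"] assms(4) k_ge_5 by auto
  moreover have "Out ?z' = {}"
    using q.arc_from_nth_into[of "k - 1"] x_in_P x_in_V assms(4) k_ge_5 by (force simp: Out_def)
  moreover obtain i where "i \<in> In z" using assms(1) by (auto simp: dominated_def)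
  then have "i \<le> N" "(x i, hd (take k q)) \<in> A" using q(2) k_ge_5 by (auto simp: In_def)
  moreover have "x i \<notin> set (take k q)" using q.set_take_disjoint[of k] x_in_P[OF \<open>i \<le> N\<close>] assms(4) by auto
  ultimately have "adjacent A (x i) (last (take k q))"
    using k_quasi_transitive_Cons[OF quasi_transitive is_path_take[OF q.path] _ x_in_V] assms(4) k_ge_5
    by simp
  then have "i \<in> In ?z'"
    using adjacent_x_iff[OF \<open>i \<le> N\<close>] \<open>Out ?z' = {}\<close> last_take_Suc[of "k - 1" q] assms(4) k_ge_5 by simp
  then show ?thesis using \<open>?z' \<in> V\<close> \<open>?z' \<notin> set P\<close> \<open>Out ?z' = {}\<close> by (auto simp: dominated_def)
qed

lemma adjacent_hd_if_adjacent_nth: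
  assumes q: "shortest_path_into V A (set P) q" and "w \<in> V" "w \<notin> set q" "k < length q"
    and "adjacent A (q ! (k - 1)) w" "length q \<le> Suc (dist_into V A (set P) w)"
  shows "adjacent A (hd q) w"
proof -
  interpret q: shortest_path_into V A "set P" q by (fact q)
  consider "(q ! (k - 1), w) \<in> A" | "(w, q ! (k - 1)) \<in> A" using assms(5) by (auto simp: adjacent_def)
  then show ?thesis
  proof cases
    case 1
    then have "adjacent A (hd (take k q)) w"
      using assms(2-4) k_ge_5 last_take_Suc[of "k - 1" q]
      by (intro k_quasi_transitive_snoc[OF quasi_transitive is_path_take[OF q.path]])
        (auto dest: in_set_takeD)
    then show ?thesis using k_ge_5 by simp
  next
    case 2
    have "dist_into V A (set P) w \<le> length (drop (k - 1) q)"
      using 2 assms(2,4) q.last_in k_ge_5 is_path_drop[OF q.path, of "k - 1"]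
      by (intro dist_into_le_Cons) (auto simp: hd_drop_conv_nth)
    then show ?thesis using assms(4,6) k_ge_5 by simp
  qed
qed

lemma dominated_adjacent_step:
  assumes dw: "dominated w" and dz: "dominated z" and "w \<noteq> z"
    and closer: "dist_into V A (set P) z \<le> dist_into V A (set P) w"
    and IH: "\<And>z'. dominated z' \<Longrightarrow> z' \<noteq> w \<Longrightarrow>
      dist_into V A (set P) z' < dist_into V A (set P) z \<Longrightarrow> adjacent A z' w"
  shows "adjacent A z w"
proof -
  define h where "h = dist_into V A (set P) z"
  have w: "w \<in> V" "w \<notin> set P" and z: "z \<in> V" "z \<notin> set P" using dw dz by (auto simp: dominated_def)
  obtain q where q: "shortest_path_into V A (set P) q" "hd q = z" "length q = Suc h"
    using shortest_path_to_P[OF z(1)] h_def by blast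
  interpret q: shortest_path_into V A "set P" q by (fact q(1))
  have "0 < h" using q.length_ge_2 q z by simp
  have "w \<notin> set q" using q.notin_if_dist_into_ge \<open>w \<noteq> z\<close> q(2,3) closer h_def by simp
  have q0: "q ! 0 = z" using q(2) is_path_nonempty[OF q.path] by (simp add: hd_conv_nth)
  show ?thesis
  proof (cases "h < k")
    case True
    then show ?thesis
      using dominated_adjacent_if_close[OF dw q(1) \<open>w \<notin> set q\<close>, of 0] \<open>0 < h\<close> q(3) q0 by simp
  next
    case False
    define z' where "z' = q ! (k - 1)"
    have long: "k < length q" using False q(3) by simp
    have "adjacent A z' w"
    proof (cases "h = k")
      case True
      then show ?thesis
        using dominated_adjacent_if_close[OF dw q(1) \<open>w \<notin> set q\<close>, of "k - 1"] q(3) k_ge_5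
        by (simp add: z'_def)
    next
      case False
      have "dominated z'"
        using dominated_along_shortest_path[OF dz q(1,2)] False \<open>\<not> h < k\<close> q(3) by (simp add: z'_def)
      moreover have "dist_into V A (set P) z' < h"
        using q.dist_into_nth[of "k - 1"] long q(3) k_ge_5 unfolding z'_def by linarith
      moreover have "z' \<noteq> w" using \<open>w \<notin> set q\<close> long by (auto simp: z'_def)
      ultimately show ?thesis using IH h_def by blast
    qed
    then show ?thesis
      using adjacent_hd_if_adjacent_nth[OF q(1) w(1) \<open>w \<notin> set q\<close> long] closer h_def q(2,3)
      by (simp add: z'_def)
  qed
qed

lemma dominated_adjacent:
  "dominated w \<Longrightarrow> dominated z \<Longrightarrow> w \<noteq> z \<Longrightarrow> adjacent A w z"
proof (induction "dist_into V A (set P) w + dist_into V A (set P) z"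
    arbitrary: w z rule: less_induct)
  case less
  show ?case
  proof (cases "dist_into V A (set P) z \<le> dist_into V A (set P) w")
    case True
    have "adjacent A z w"
    proof (rule dominated_adjacent_step[OF less.prems True])
      fix z' assume "dominated z'" "z' \<noteq> w" "dist_into V A (set P) z' < dist_into V A (set P) z"
      then show "adjacent A z' w" using less.hyps[of z' w] less.prems(1) by simp
    qed
    then show ?thesis by (simp add: adjacent_sym)
  next
    case False
    show ?thesis
    proof (rule dominated_adjacent_step[OF less.prems(2,1) less.prems(3)[symmetric]])
      fix w' assume "dominated w'" "w' \<noteq> z" "dist_into V A (set P) w' < dist_into V A (set P) w"
      then show "adjacent A w' z" using less.hyps[of w' z] less.prems(2) by simp
    qed (use False in simp)
  qed
qed

end

section \<open>Non-adjacent vertices outside P\<close>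

locale nonadjacent_pair = semicomplete_geodesic +
  fixes w z :: 'a
  assumes w: "w \<in> V" "w \<notin> set P" and z: "z \<in> V" "z \<notin> set P"
    and distinct: "w \<noteq> z" and nonadjacent: "\<not> adjacent A w z"

sublocale nonadjacent_pair \<subseteq> swap: nonadjacent_pair V A k P z w
  using w z distinct nonadjacent by unfold_locales (auto simp: adjacent_sym)

context nonadjacent_pair
begin

lemma Out_le_In:
  assumes "j \<in> Out w" "i \<in> In z" shows "j \<le> i"
proof (rule ccontr)
  assume "\<not> j \<le> i"
  obtain q where q: "is_path V A q" "set q \<subseteq> set P" "hd q = x j" "last q = x i"
    "length q = Suc (k - 2)"
    by (rule descending_path_in_P[of i j "k - 2"]) (use assms \<open>\<not> j \<le> i\<close> Out_le k_ge_5 in auto)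
  have "adjacent A w z"
    using q w z distinct assms k_ge_5
    by (intro k_quasi_transitive_Cons_snoc[OF quasi_transitive q(1)]) (auto simp: In_def Out_def)
  then show False using nonadjacent by blast
qed

lemma Out_In_gap:
  assumes "j \<in> Out w" "i \<in> In z" shows "i + 2 \<noteq> j + k"
proof
  assume gap: "i + 2 = j + k"
  have "i \<le> N" using assms In_le by blast
  have "adjacent A w z"
    using set_seg_subset_P[OF \<open>i \<le> N\<close>] w z distinct assms gap \<open>i \<le> N\<close> k_ge_5
    by (intro k_quasi_transitive_Cons_snoc[OF quasi_transitive is_path_seg[of j i]])
      (auto simp: In_def Out_def)
  then show False using nonadjacent by blast
qed

lemma Out_le_6:
  assumes "j \<in> Out w" "i \<in> In z" shows "j \<le> 6"
proof (rule ccontr)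
  assume "\<not> j \<le> 6"
  have low: "t \<in> Out w" if "t \<le> 4" for t
  proof -
    have "t \<in> In w \<union> Out w" using adjacent_before_Out[OF w assms(1), of t] that \<open>\<not> j \<le> 6\<close> by simp
    moreover have "t \<notin> In w" using Out_le_In_add_2[OF w _ assms(1), of t] that \<open>\<not> j \<le> 6\<close> by auto
    ultimately show ?thesis by blast
  qed
  obtain i' where "i' \<in> In z" "k \<le> i' + 2" using ex_In_add_2_ge[OF z assms(2)] .
  moreover have "i' + 2 - k \<in> Out w" using low In_le[OF \<open>i' \<in> In z\<close>] by simp
  ultimately show False using Out_In_gap by fastforce
qed

lemma k_le_In_add_4:
  assumes "j \<in> Out w" "i \<in> In z" shows "k \<le> i + 4"
proof (rule ccontr)
  assume "\<not> k \<le> i + 4"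
  have high: "c \<in> In z" if "k \<le> c + 2" "c \<le> N" for c
  proof -
    have "c \<in> In z \<union> Out z" using adjacent_after_In[OF z assms(2), of c] that \<open>\<not> k \<le> i + 4\<close> by simp
    moreover have "c \<notin> Out z" using Out_le_In_add_2[OF z assms(2), of c] that \<open>\<not> k \<le> i + 4\<close> by auto
    ultimately show ?thesis by blast
  qed
  obtain j' where "j' \<in> Out w" "j' \<le> 4" using ex_Out_le_4[OF w assms(1)] .
  moreover have "j' + k - 2 \<in> In z" using high \<open>j' \<le> 4\<close> by simp
  ultimately show False using Out_In_gap k_ge_5 by fastforce
qed

end

(* Reopening the context makes the facts proved so far available for the swapped pair z, w
   under the prefix swap. *)

context nonadjacent_pair
begin

lemma zero_in_Out:
  assumes "Out w \<noteq> {}" "Out z \<noteq> {}" shows "0 \<in> Out w"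
proof (rule ccontr)
  assume "0 \<notin> Out w"
  obtain j j' where "j \<in> Out w" "j' \<in> Out z" using assms by blast
  then have "0 < j" using \<open>0 \<notin> Out w\<close> by (cases j) auto
  then have "0 \<in> In w" using adjacent_before_Out[OF w \<open>j \<in> Out w\<close>] \<open>0 \<notin> Out w\<close> by blast
  then show False using swap.k_le_In_add_4[OF \<open>j' \<in> Out z\<close> \<open>0 \<in> In w\<close>] k_ge_5 by simp
qed

lemma N_in_In:
  assumes "In w \<noteq> {}" "In z \<noteq> {}" shows "N \<in> In z"
proof (rule ccontr)
  assume "N \<notin> In z"
  obtain i i' where "i \<in> In z" "i' \<in> In w" using assms by blast
  then have "i < N" using In_le \<open>N \<notin> In z\<close> le_neq_implies_less by blast
  then have "N \<in> Out z" using adjacent_after_In[OF z \<open>i \<in> In z\<close>] \<open>N \<notin> In z\<close> by blast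
  then show False using swap.Out_le_6[OF _ \<open>i' \<in> In w\<close>] k_ge_5 by fastforce
qed

end

context nonadjacent_pair
begin

context
  assumes In_w: "In w \<noteq> {}" and Out_w: "Out w \<noteq> {}"
    and In_z: "In z \<noteq> {}" and Out_z: "Out z \<noteq> {}"
begin

lemma ex_Out_ge_2: "\<exists>j\<in>Out w. 2 \<le> j"
proof (rule ccontr)
  assume "\<not> ?thesis"
  then have small: "j \<in> Out w \<Longrightarrow> j \<le> 1" for j by force
  have "N \<in> In w" using swap.N_in_In In_w In_z by blast
  then have "3 \<in> In w" using adjacent_In_shift[OF w \<open>N \<in> In w\<close>, of 3] small by fastforce
  have "k - 2 \<in> In w"
  proof (cases "k - 2 = 3")
    case False
    then show ?thesis
      using adjacent_after_In[OF w \<open>3 \<in> In w\<close>, of "k - 2"] small k_ge_5 by fastforce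
  qed (use \<open>3 \<in> In w\<close> in simp)
  moreover have "0 \<in> Out z" using swap.zero_in_Out Out_w Out_z by blast
  ultimately show False using swap.Out_In_gap k_ge_5 by fastforce
qed

lemma ex_In_le_k: "\<exists>i\<in>In z. i \<le> k"
proof (rule ccontr)
  assume "\<not> ?thesis"
  then have large: "i \<in> In z \<Longrightarrow> k < i" for i by force
  have "0 \<in> Out z" using swap.zero_in_Out Out_w Out_z by blast
  then have "k - 1 \<in> Out z"
    using adjacent_Out_shift[OF z \<open>0 \<in> Out z\<close>, of "k - 1"] large k_ge_5 by fastforce
  have "4 \<in> Out z"
  proof (cases "k - 1 = 4")
    case False
    then show ?thesis
      using adjacent_before_Out[OF z \<open>k - 1 \<in> Out z\<close>, of 4] large k_ge_5 by fastforce
  qed (use \<open>k - 1 \<in> Out z\<close> in simp)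
  moreover have "N \<in> In w" using swap.N_in_In In_w In_z by blast
  ultimately show False using swap.Out_In_gap by fastforce
qed

end

end

context nonadjacent_pair
begin

context
  assumes In_w: "In w \<noteq> {}" and Out_w: "Out w \<noteq> {}"
    and In_z: "In z \<noteq> {}" and Out_z: "Out z \<noteq> {}"
begin

lemma two_in_Out: "2 \<in> Out w"
proof -
  obtain j where j: "j \<in> Out w" "2 \<le> j" using ex_Out_ge_2[OF In_w Out_w In_z Out_z] by blast
  show ?thesis
  proof (rule ccontr)
    assume "2 \<notin> Out w"
    then have "2 < j" using j by (cases "j = 2") auto
    then have "2 \<in> In w" using adjacent_before_Out[OF w j(1)] \<open>2 \<notin> Out w\<close> by blast
    obtain j' where j': "j' \<in> Out z" "2 \<le> j'"
      using swap.ex_Out_ge_2[OF In_z Out_z In_w Out_w] by blast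
    then have "j' = 2" using swap.Out_le_In[OF j'(1) \<open>2 \<in> In w\<close>] by simp
    then have "2 \<in> Out z" using j' by simp
    have "k \<in> In w \<union> Out w" using adjacent_after_In[OF w \<open>2 \<in> In w\<close>, of k] k_ge_5 by simp
    moreover have "k \<notin> Out w" using Out_le_In_add_2[OF w \<open>2 \<in> In w\<close>, of k] k_ge_5 by auto
    ultimately have "k \<in> In w" by blast
    then show False using swap.Out_In_gap[OF \<open>2 \<in> Out z\<close> \<open>k \<in> In w\<close>] by simp
  qed
qed

lemma k_in_In: "k \<in> In z"
proof -
  obtain i where i: "i \<in> In z" "i \<le> k" using ex_In_le_k[OF In_w Out_w In_z Out_z] by blast
  show ?thesis
  proof (rule ccontr)
    assume "k \<notin> In z"
    then have "i < k" using i by (cases "i = k") auto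
    then have "k \<in> Out z" using adjacent_after_In[OF z i(1), of k] \<open>k \<notin> In z\<close> by simp
    obtain i' where i': "i' \<in> In w" "i' \<le> k"
      using swap.ex_In_le_k[OF In_z Out_z In_w Out_w] by blast
    then have "i' = k" using swap.Out_le_In[OF \<open>k \<in> Out z\<close> i'(1)] by simp
    then have "k \<in> In w" using i' by simp
    have "2 \<in> In z \<union> Out z" using adjacent_before_Out[OF z \<open>k \<in> Out z\<close>, of 2] k_ge_5 by simp
    moreover have "2 \<notin> In z" using Out_le_In_add_2[OF z _ \<open>k \<in> Out z\<close>, of 2] k_ge_5 by auto
    ultimately have "2 \<in> Out z" by blast
    then show False using swap.Out_In_gap[OF \<open>2 \<in> Out z\<close> \<open>k \<in> In w\<close>] by simp
  qed
qed

end

lemma Out_empty_or_In_empty: "Out w = {} \<or> In z = {}"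
proof (rule ccontr)
  assume "\<not> ?thesis"
  then obtain j i where j: "j \<in> Out w" and i: "i \<in> In z" by blast
  consider "In w = {}" | "Out z = {}" | "In w \<noteq> {}" "Out z \<noteq> {}" by blast
  then show False
  proof cases
    case 1
    then have "N \<in> Out w" using Out_eq_atMost[OF w] j by blast
    then show False using Out_le_6[OF _ i] k_ge_5 by fastforce
  next
    case 2
    then have "0 \<in> In z" using In_eq_atMost[OF z] i by blast
    then show False using k_le_In_add_4[OF j] k_ge_5 by fastforce
  next
    case 3
    then show False using two_in_Out k_in_In Out_In_gap i j by fastforce
  qed
qed

end

section \<open>The converse digraph and the theorem\<close>

context semicomplete_geodesic
begin

lemma converse_geodesic: "semicomplete_geodesic V (A\<inverse>) k (rev P)"
proof
  show "k + 3 \<le> length q"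
    if q: "is_path V (A\<inverse>) q" "hd q = hd (rev P)" "last q = last (rev P)" for q
  proof -
    have "is_path V A (rev q)" using is_path_rev_converse[OF q(1)] by simp
    moreover have "hd (rev q) = hd P" "last (rev q) = last P"
      using q is_path_nonempty[OF q(1)] is_path_nonempty[OF path_P]
      by (simp_all add: hd_rev last_rev)
    ultimately show ?thesis using geodesic by fastforce
  qed
  show "semicomplete (set (rev P)) (induced_arcs (A\<inverse>) (set (rev P)))"
    using semicomplete_P by (auto simp: semicomplete_def adjacent_def induced_arcs_def)
qed (use k_quasi_transitive_converse[OF quasi_transitive]
      strong_converse[OF strong] k_ge_5 is_path_rev_converse[OF path_P] length_P in auto)

lemma x_rev: "i \<le> N \<Longrightarrow> semicomplete_geodesic.x (rev P) i = x (N - i)"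
  using length_P by (simp add: semicomplete_geodesic.x_def[OF converse_geodesic] x_def rev_nth)

lemma reflect_image: "{i. i \<le> N \<and> Q (N - i)} = (\<lambda>i. N - i) ` {j. j \<le> N \<and> Q j}"
proof (intro set_eqI iffI)
  fix i assume "i \<in> {i. i \<le> N \<and> Q (N - i)}"
  then show "i \<in> (\<lambda>i. N - i) ` {j. j \<le> N \<and> Q j}" by (intro image_eqI[of _ _ "N - i"]) auto
qed auto

lemma In_converse: "semicomplete_geodesic.In (A\<inverse>) k (rev P) y = (\<lambda>i. N - i) ` Out y"
  using reflect_image[of "\<lambda>j. (y, x j) \<in> A"]
  by (simp add: semicomplete_geodesic.In_def[OF converse_geodesic] x_rev Out_def cong: conj_cong)

lemma Out_converse: "semicomplete_geodesic.Out (A\<inverse>) k (rev P) y = (\<lambda>i. N - i) ` In y"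
  using reflect_image[of "\<lambda>j. (x j, y) \<in> A"]
  by (simp add: semicomplete_geodesic.Out_def[OF converse_geodesic] x_rev In_def cong: conj_cong)

lemma outside_adjacent:
  assumes w: "w \<in> V" "w \<notin> set P" and z: "z \<in> V" "z \<notin> set P" and "w \<noteq> z"
  shows "adjacent A w z"
proof (rule ccontr)
  assume "\<not> adjacent A w z"
  then interpret nonadjacent_pair V A k P w z using assms by unfold_locales
  interpret converse: semicomplete_geodesic V "A\<inverse>" k "rev P" by (rule converse_geodesic)
  have "In w \<union> Out w \<noteq> {}" "In z \<union> Out z \<noteq> {}" using adjacent_to_P w z by blast+
  moreover have "Out w = {} \<or> In z = {}" "Out z = {} \<or> In w = {}"
    using Out_empty_or_In_empty swap.Out_empty_or_In_empty by blast+
  ultimately consider "Out w = {}" "Out z = {}" "In w \<noteq> {}" "In z \<noteq> {}"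
    | "In w = {}" "In z = {}" "Out w \<noteq> {}" "Out z \<noteq> {}"
    by blast
  then show False
  proof cases
    case 1
    then have "dominated w" "dominated z" using w z by (simp_all add: dominated_def)
    then show False using dominated_adjacent \<open>w \<noteq> z\<close> nonadjacent by blast
  next
    case 2
    then have "converse.dominated w" "converse.dominated z"
      using w z by (simp_all add: converse.dominated_def In_converse Out_converse)
    then show False using converse.dominated_adjacent \<open>w \<noteq> z\<close> nonadjacent by simp
  qed
qed

end

lemma semicomplete_geodesicI:
  assumes "k_quasi_transitive k V A" "strong V A" "5 \<le> k"
    and "is_path_from_to V A P u v" "path_len P = k + 2" "dist V A u v = k + 2"
    and "semicomplete (set P) (induced_arcs A (set P))"
  shows "semicomplete_geodesic V A k P"
proof
  have P: "is_path V A P" "hd P = u" "last P = v" using assms(4) by (auto simp: is_path_from_to_def)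
  then show "is_path V A P" by simp
  show "length P = k + 3" using assms(5) is_path_nonempty[OF P(1)] by (simp add: path_len_def)
  show "k + 3 \<le> length q" if "is_path V A q" "hd q = hd P" "last q = last P" for q
  proof -
    have "is_path_from_to V A q u v" using that P by (simp add: is_path_from_to_def)
    then have "dist V A u v \<le> path_len q" unfolding dist_def by (intro Least_le) blast
    then show ?thesis using assms(6) is_path_nonempty[OF that(1)] by (simp add: path_len_def)
  qed
qed (use assms in auto)

theorem lemma2p13:
  fixes V :: "'a set" and A :: "('a \<times> 'a) set" and k :: nat
    and u v :: 'a and P :: "'a list"
  assumes "odd k" and "k \<ge> 5"
    and "digraph V A" and "strong V A" and "k_quasi_transitive k V A"
    and "diam V A \<ge> k + 2"
    and "u \<in> V" and "v \<in> V" and "dist V A u v = k + 2"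
    and "is_path_from_to V A P u v" and "path_len P = dist V A u v"
    and "semicomplete (set P) (induced_arcs A (set P))"
  shows "semicomplete (V - set P) (induced_arcs A (V - set P))"
proof -
  interpret semicomplete_geodesic V A k P
    using assms by (intro semicomplete_geodesicI[of _ _ _ _ u v]) simp_all
  show ?thesis
    using outside_adjacent by (auto simp: semicomplete_def adjacent_def induced_arcs_def)
qed

end
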